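(* Let $r \le \min(M,N)$ be positive integers and let $\mathcal{P}=\mathcal{B}_{\infty,+}=\{\mathbf{x}\in\mathbb{R}^r \mid \mathbf{0}\le\mathbf{x}\le\mathbf{1}\}$ (componentwise inequalities). Let $\mathbf{H}_g\in\mathbb{R}^{M\times r}$ have full column rank, let $\mathbf{S}_g\in\mathbb{R}^{r\times N}$ have all of its columns in $\mathcal{P}$, and set $\mathbf{Y}=\mathbf{H}_g\mathbf{S}_g$. Suppose $\mathbf{S}_g$ is a sufficiently scattered factor corresponding to $\mathcal{P}$ (as defined in the context). Consider the Det-Max optimization problem $$\max_{\mathbf{H}\in\mathbb{R}^{M\times r},\ \mathbf{S}\in\mathbb{R}^{r\times N}} \det(\mathbf{S}\mathbf{S}^T)\quad\text{subject to}\quad \mathbf{Y}=\mathbf{H}\mathbf{S},\ \ \mathbf{S}_{:,j}\in\mathcal{P}\ \ (j=1,\dots,N).$$ Then every global optimum $(\mathbf{H}_*,\mathbf{S}_* )$ of this problem satisfies $$\mathbf{H}_*=\mathbf{H}_g\boldsymbol{\Pi}^T,\qquad \mathbf{S}_*=\boldsymbol{\Pi}\mathbf{S}_g,$$ for some permutation matrix $\boldsymbol{\Pi}\in\mathbb{R}^{r\times r}$.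
   Context: $\mathbf{1}$ and $\mathbf{0}$ denote the all-ones and all-zeros vectors. $\mathbf{S}_{:,j}$ denotes the $j$-th column of $\mathbf{S}$; $\mathrm{conv}(\mathbf{S})$ is the convex hull of the columns of $\mathbf{S}$. For a convex polytope $\mathcal{P}\subset\mathbb{R}^r$ with nonempty interior, $\mathcal{E}_\mathcal{P}$ denotes its maximum volume inscribed ellipsoid (MVIE), i.e. the (unique) ellipsoid of maximal volume contained in $\mathcal{P}$, written $\mathcal{E}_\mathcal{P}=\{\mathbf{C}_\mathcal{P}\mathbf{u}+\mathbf{g}_\mathcal{P}\mid \|\mathbf{u}\|_2\le 1\}$ with $\mathbf{C}_\mathcal{P}\succeq 0$ and center $\mathbf{g}_\mathcal{P}$. For a set $C\subset\mathbb{R}^r$ and point $\mathbf{d}$, the polar of $C$ with respect to $\mathbf{d}$ is $C^{*,\mathbf{d}}=\{\mathbf{x}\in\mathbb{R}^r\mid \langle\mathbf{x},\mathbf{y}-\mathbf{d}\rangle\le 1\ \forall \mathbf{y}\in C\}$. $\mathrm{bd}(\cdot)$ denotes boundary and $\mathrm{ext}(\cdot)$ the set of extreme points (vertices). A matrix $\mathbf{S}\in\mathbb{R}^{r\times N}$ is called a sufficiently scattered factor corresponding to $\mathcal{P}$ if (i) $\mathcal{P}\supseteq\mathrm{conv}(\mathbf{S})\supset\mathcal{E}_\mathcal{P}$, and (ii) $\mathrm{conv}(\mathbf{S})^{*,\mathbf{g}_\mathcal{P}}\cap\mathrm{bd}(\mathcal{E}_\mathcal{P}^{*,\mathbf{g}_\mathcal{P}})=\mathrm{ext}(\mathcal{P}^{*,\mathbf{g}_\mathcal{P}})$.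 *)

theory Defs
  imports "HOL-Analysis.Analysis"
begin

definition psd_mat :: "real^'r^'r \<Rightarrow> bool" where
  "psd_mat C \<longleftrightarrow> transpose C = C \<and> (\<forall>x. 0 \<le> x \<bullet> (C *v x))"

definition ellipsoid :: "real^'r^'r \<Rightarrow> real^'r \<Rightarrow> (real^'r) set" where
  "ellipsoid C g = {C *v u + g | u. norm u \<le> 1}"

definition is_MVIE :: "(real^'r) set \<Rightarrow> real^'r^'r \<Rightarrow> real^'r \<Rightarrow> bool" where
  "is_MVIE P C g \<longleftrightarrow> psd_mat C \<and> ellipsoid C g \<subseteq> P \<and>
     (\<forall>C' g'. psd_mat C' \<and> ellipsoid C' g' \<subseteq> P \<longrightarrow>
        measure lebesgue (ellipsoid C' g') \<le> measure lebesgue (ellipsoid C g))"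

definition MVIE :: "(real^'r) set \<Rightarrow> (real^'r) set" where
  "MVIE P = (THE E. \<exists>C g. is_MVIE P C g \<and> E = ellipsoid C g)"

definition MVIE_center :: "(real^'r) set \<Rightarrow> real^'r" where
  "MVIE_center P = (THE g. \<exists>C. is_MVIE P C g)"

definition polar_wrt :: "(real^'r) set \<Rightarrow> real^'r \<Rightarrow> (real^'r) set" where
  "polar_wrt C d = {x. \<forall>y\<in>C. x \<bullet> (y - d) \<le> 1}"

definition ext_pts :: "(real^'r) set \<Rightarrow> (real^'r) set" where
  "ext_pts S = {x. x extreme_point_of S}"

definition suff_scattered :: "real^'n^'r \<Rightarrow> (real^'r) set \<Rightarrow> bool" where
  "suff_scattered S P \<longleftrightarrow>
     (let E = MVIE P; g = MVIE_center P; K = convex hull (columns S) in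
       P \<supseteq> K \<and> K \<supseteq> E \<and>
       polar_wrt K g \<inter> frontier (polar_wrt E g) = ext_pts (polar_wrt P g))"

definition box_pos :: "(real^'r) set" where
  "box_pos = {x. \<forall>i. 0 \<le> x $ i \<and> x $ i \<le> 1}"

definition perm_mat :: "real^'r^'r \<Rightarrow> bool" where
  "perm_mat Q \<longleftrightarrow> (\<exists>p. p permutes (UNIV :: 'r set) \<and>
      Q = (\<chi> i j. if p i = j then 1 else 0))"

definition detmax_feasible :: "real^'n^'m \<Rightarrow> (real^'r) set \<Rightarrow> real^'r^'m \<Rightarrow> real^'n^'r \<Rightarrow> bool" where
  "detmax_feasible Y P H S \<longleftrightarrow> Y = H ** S \<and> (\<forall>j. column j S \<in> P)"

definition detmax_optimal :: "real^'n^'m \<Rightarrow> (real^'r) set \<Rightarrow> real^'r^'m \<Rightarrow> real^'n^'r \<Rightarrow> bool" where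
  "detmax_optimal Y P H S \<longleftrightarrow> detmax_feasible Y P H S \<and>
     (\<forall>H' S'. detmax_feasible Y P H' S' \<longrightarrow>
        det (S' ** transpose S') \<le> det (S ** transpose S))"

end

theory Submission
  imports Defs
begin

text \<open>
  The maximum volume ellipsoid inscribed in the box \<open>[0,1]\<^sup>r\<close> is the ball of radius 1/2 about
  its centre \<open>c\<close>: the rows of the shape matrix of an inscribed ellipsoid have length at most 1/2,
  its volume is proportional to the determinant, and Hadamard's inequality, together with its
  equality case, bounds the determinant by the product of the row lengths. The polar of this ball
  with respect to \<open>c\<close> is the ball of radius 2.

  An optimal pair has the form \<open>S = A Sg\<close> with \<open>|det A| \<ge> 1\<close>, where \<open>A\<close> maps the convex hull
  \<open>K\<close> of the columns of \<open>Sg\<close> into the box. Every row \<open>a\<close> of \<open>A\<close> satisfies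
  \<open>0 \<le> a \<bullet> x \<le> 1\<close> on \<open>K\<close>, which contains the ball, so \<open>|a| \<le> 1\<close>, and the equality case
  of Hadamard's inequality forces \<open>|a| = 1\<close>. Then \<open>2a\<close> lies in the polar of \<open>K\<close> and on the
  sphere of radius 2, so sufficient scattering puts it in the polar of the box, which bounds its
  l1-norm by 2. A unit vector of l1-norm at most 1 with nonnegative coordinate sum is a standard
  basis vector, so \<open>A\<close> is a permutation matrix.
\<close>

section \<open>Volumes of linear images\<close>

lemma measure_swap_cbox:
  fixes m n :: "'n::finite"
  shows "measure lebesgue ((\<lambda>x::real^'n. \<chi> i. x $ Transposition.transpose m n i) ` cbox a b)
    = measure lebesgue (cbox a b)" (is "measure lebesgue (?h ` _) = _")
proof (cases "cbox a b = {}")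
  case False
  have image: "?h ` cbox a b = cbox (?h a) (?h b)"
    by (auto simp: image_iff lambda_swap_Galois mem_box_cart) (metis transpose_involutory)+
  have "?h ` cbox a b \<noteq> {}"
    using False by blast
  then show ?thesis
    using prod.permute[OF permutes_swap_id, where S=UNIV and g="\<lambda>i. (b - a) $ i", symmetric]
    by (simp add: image content_cbox_cart False)
qed simp

lemma measure_shear_cbox:
  fixes m n :: "'n::finite"
  assumes "m \<noteq> n"
  shows "measure lebesgue ((\<lambda>x::real^'n. \<chi> i. if i = m then x $ m + x $ n else x $ i) ` cbox a b)
    = measure lebesgue (cbox a b)" (is "measure lebesgue (?h ` _) = _")
proof (cases "cbox a b = {}")
  case False
  have "linear ?h"
    by (rule linearI) (auto simp: vec_eq_iff algebra_simps)
  have translate: "cbox a b = (+) a ` cbox 0 (b - a)"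
    using cbox_translation[of a 0 "b - a"] by simp
  then have "cbox 0 (b - a) \<noteq> {}"
    using False by blast
  then have "measure lebesgue (?h ` cbox 0 (b - a)) = measure lebesgue (cbox 0 (b - a))"
    using assms by (intro measure_shear_interval) simp_all
  moreover have "?h ` cbox a b = (+) (?h a) ` ?h ` cbox 0 (b - a)"
    unfolding translate by (simp add: image_image linear_add[OF \<open>linear ?h\<close>])
  ultimately show ?thesis
    unfolding translate by (simp add: measure_translation)
qed simp

lemma det_matrix_coordinate_swap:
  "\<bar>det (matrix (\<lambda>x::real^'n. \<chi> i. x $ Transposition.transpose m n i))\<bar> = 1"
proof -
  have "(\<chi> i j. if Transposition.transpose m n i = j then 1 else 0)
      = (\<chi> i j. if j = Transposition.transpose m n i then 1 else (0::real))"
    by (auto intro!: Cart_lambda_cong)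
  then have "matrix (\<lambda>x::real^'n. \<chi> i. x $ Transposition.transpose m n i)
      = transpose (\<chi> i j. mat 1 $ i $ Transposition.transpose m n j)"
    by (auto simp: matrix_eq transpose_def axis_def mat_def matrix_def)
  then show ?thesis
    by (simp add: det_permute_columns permutes_swap_id sign_swap_id abs_mult)
qed

lemma det_matrix_shear:
  fixes m n :: "'n::finite"
  assumes "m \<noteq> n"
  shows "det (matrix (\<lambda>x::real^'n. \<chi> i. if i = m then x $ m + x $ n else x $ i)) = 1"
proof -
  have "matrix (\<lambda>x::real^'n. \<chi> i. if i = m then x $ m + x $ n else x $ i)
      = (\<chi> k. if k = m then row m (mat 1) + row n (mat 1) else row k (mat 1))"
    by (auto simp: matrix_def vec_eq_iff axis_def row_def mat_def)
  moreover have "row n (mat 1) \<in> vec.span {row j (mat 1 :: real^'n^'n) | j. j \<noteq> m}"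
    using assms by (intro vec.span_base) auto
  ultimately show ?thesis
    by (simp add: det_row_span)
qed

lemma measure_linear_image_singular:
  fixes f :: "real^'n::finite \<Rightarrow> real^'n"
  assumes "linear f" and "\<not> inj f"
  shows "f ` S \<in> lmeasurable" and "measure lebesgue (f ` S) = \<bar>det (matrix f)\<bar> * measure lebesgue S"
proof -
  have "det (matrix f) = 0" and "negligible (f ` S)"
    using assms det_nz_iff_inj negligible_linear_singular_image by auto
  then show "f ` S \<in> lmeasurable" and "measure lebesgue (f ` S) = \<bar>det (matrix f)\<bar> * measure lebesgue S"
    by (simp_all add: negligible_imp_measurable negligible_imp_measure0)
qed

lemma measure_linear_image_if_preserves_boxes:
  fixes g :: "real^'n::finite \<Rightarrow> real^'n"
  assumes "linear g" and "\<bar>det (matrix g)\<bar> = 1"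
    and "\<And>a b. measure lebesgue (g ` cbox a b) = measure lebesgue (cbox a b)" and "S \<in> lmeasurable"
  shows "g ` S \<in> lmeasurable \<and> measure lebesgue (g ` S) = \<bar>det (matrix g)\<bar> * measure lebesgue S"
  using measure_linear_sufficient[of g S 1] assms by simp

text \<open>Change_Of_Vars proves this as \<open>measure_linear_image\<close> only for index types of class
  wellorder; the argument does not need the order.\<close>

lemma measure_linear_image_cart:
  fixes f :: "real^'n::finite \<Rightarrow> real^'n"
  assumes "linear f" and "S \<in> lmeasurable"
  shows "measure lebesgue (f ` S) = \<bar>det (matrix f)\<bar> * measure lebesgue S"
proof -
  let ?Q = "\<lambda>f S. f ` S \<in> lmeasurable \<and>
              measure lebesgue (f ` S) = \<bar>det (matrix f)\<bar> * measure lebesgue S"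
  have "\<forall>S \<in> lmeasurable. ?Q f S"
  proof (rule induct_linear_elementary[OF \<open>linear f\<close>]; intro ballI)
    fix f g :: "real^'n \<Rightarrow> real^'n" and S :: "(real^'n) set"
    assume "linear f" "linear g" and "\<forall>S \<in> lmeasurable. ?Q f S"
      and "\<forall>S \<in> lmeasurable. ?Q g S" and "S \<in> lmeasurable"
    then have "?Q g S" and "?Q f (g ` S)"
      by blast+
    then show "?Q (f \<circ> g) S"
      using matrix_compose[OF \<open>linear g\<close> \<open>linear f\<close>]
      by (simp add: o_def image_comp abs_mult det_mul)
  next
    fix f :: "real^'n \<Rightarrow> real^'n" and i and S :: "(real^'n) set"
    assume "linear f" and "\<And>x. f x $ i = 0"
    then have "\<not> inj f"
      by (metis linear_injective_imp_surjective one_neq_zero surjE vec_component)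
    with \<open>linear f\<close> show "?Q f S"
      using measure_linear_image_singular by blast
  next
    fix c :: "'n \<Rightarrow> real" and S :: "(real^'n) set"
    assume "S \<in> lmeasurable"
    then show "?Q (\<lambda>x. \<chi> i. c i * x $ i) S"
      by (simp add: measurable_stretch measure_stretch axis_def matrix_def det_diagonal)
  next
    fix m n :: 'n and S :: "(real^'n) set"
    assume "S \<in> lmeasurable"
    have "linear (\<lambda>x::real^'n. \<chi> i. x $ Transposition.transpose m n i)"
      by (rule linearI) (simp_all add: plus_vec_def scaleR_vec_def)
    with \<open>S \<in> lmeasurable\<close> show "?Q (\<lambda>x. \<chi> i. x $ Transposition.transpose m n i) S"
      using det_matrix_coordinate_swap measure_swap_cbox
      by (intro measure_linear_image_if_preserves_boxes) auto
  next
    fix m n :: 'n and S :: "(real^'n) set"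
    assume "m \<noteq> n" and "S \<in> lmeasurable"
    have "linear (\<lambda>x::real^'n. \<chi> i. if i = m then x $ m + x $ n else x $ i)"
      by (rule linearI) (auto simp: algebra_simps plus_vec_def scaleR_vec_def vec_eq_iff)
    with \<open>m \<noteq> n\<close> \<open>S \<in> lmeasurable\<close>
    show "?Q (\<lambda>x. \<chi> i. if i = m then x $ m + x $ n else x $ i) S"
      using det_matrix_shear[OF \<open>m \<noteq> n\<close>] measure_shear_cbox[OF \<open>m \<noteq> n\<close>]
      by (intro measure_linear_image_if_preserves_boxes) auto
  qed
  with assms show ?thesis
    by blast
qed

section \<open>Hadamard's inequality\<close>

lemma matrix_matrix_mult_nth_row: "(A ** B) $ i = (A $ i) v* (B :: real^'m^'n)"
  by (simp add: matrix_matrix_mult_def vector_matrix_mult_def vec_eq_iff)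

lemma linear_vector_matrix_mult: "linear (\<lambda>x. x v* (B :: real^'m^'n))"
  using matrix_vector_mul_linear[of "transpose B"] by simp

lemma axis_vector_matrix_mult: "axis k 1 v* (B :: real^'m^'n) = B $ k"
  by (metis transpose_matrix_vector matrix_vector_mult_basis column_transpose row_def vec_nth_inverse)

lemma orthogonal_projection_residual:
  fixes b :: "'i \<Rightarrow> 'a::real_inner" and c :: 'a
  assumes "finite S" and orth: "\<And>i j. i \<in> S \<Longrightarrow> j \<in> S \<Longrightarrow> i \<noteq> j \<Longrightarrow> b i \<bullet> b j = 0"
  defines "p \<equiv> \<Sum>i\<in>S. (c \<bullet> b i / (b i \<bullet> b i)) *\<^sub>R b i"
  shows "\<And>j. j \<in> S \<Longrightarrow> (c - p) \<bullet> b j = 0" and "norm c^2 = norm (c - p)^2 + norm p^2"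
proof -
  show residual: "(c - p) \<bullet> b j = 0" if "j \<in> S" for j
  proof -
    have "(\<Sum>i\<in>S. (c \<bullet> b i / (b i \<bullet> b i)) * (b i \<bullet> b j)) = (c \<bullet> b j / (b j \<bullet> b j)) * (b j \<bullet> b j)"
      using assms that by (subst sum.remove[of S j]) (auto intro!: sum.neutral)
    then show ?thesis
      by (cases "b j = 0") (simp_all add: p_def inner_diff_left inner_sum_left)
  qed
  then have "(c - p) \<bullet> p = 0"
    by (simp add: p_def inner_sum_right)
  then show "norm c^2 = norm (c - p)^2 + norm p^2"
    using norm_add_Pythagorean[of "c - p" p] by (simp add: orthogonal_def)
qed

lemma row_subtract_combination:
  fixes L :: "real^'n^'n" and C :: "real^'m^'n" and c :: "'n \<Rightarrow> real"
  assumes "k \<notin> S"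
  defines "L' \<equiv> \<chi> i. if i = k then L $ k - (\<Sum>j\<in>S. c j *\<^sub>R L $ j) else L $ i"
  shows "det L' = det L"
    and "(L' ** C) $ i
      = (if i = k then (L ** C) $ k - (\<Sum>j\<in>S. c j *\<^sub>R (L ** C) $ j) else (L ** C) $ i)"
proof -
  have row_L: "row i L = L $ i" for i
    by (simp add: row_def vec_nth_inverse)
  have "(\<Sum>j\<in>S. c j *\<^sub>R L $ j) \<in> vec.span {row j L | j. j \<noteq> k}"
  proof (intro vec.span_sum)
    fix j
    assume "j \<in> S"
    then have "L $ j \<in> vec.span {row j L | j. j \<noteq> k}"
      using assms(1) by (intro vec.span_base) (auto simp: row_L)
    then show "c j *\<^sub>R L $ j \<in> vec.span {row j L | j. j \<noteq> k}"
      using vec.span_scale[of "L $ j" _ "c j"] by (simp add: scalar_mult_eq_scaleR)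
  qed
  then have "det (\<chi> i. if i = k then row k L + - (\<Sum>j\<in>S. c j *\<^sub>R L $ j) else row i L) = det L"
    by (rule det_row_span[OF vec.span_neg])
  then show "det L' = det L"
    unfolding row_L L'_def by (simp only: diff_conv_add_uminus)
  show "(L' ** C) $ i
      = (if i = k then (L ** C) $ k - (\<Sum>j\<in>S. c j *\<^sub>R (L ** C) $ j) else (L ** C) $ i)"
    by (simp add: L'_def matrix_matrix_mult_nth_row linear_diff[OF linear_vector_matrix_mult]
        linear_sum[OF linear_vector_matrix_mult] linear_scale[OF linear_vector_matrix_mult])
qed

lemma orthogonalize_rows_on:
  fixes C :: "real^'m^'n"
  assumes "finite S"
  shows "\<exists>L :: real^'n^'n. det L = 1
    \<and> (\<forall>i\<in>S. \<forall>j\<in>S. i \<noteq> j \<longrightarrow> (L ** C) $ i \<bullet> (L ** C) $ j = 0)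
    \<and> (\<forall>i. i \<notin> S \<longrightarrow> L $ i = axis i 1)
    \<and> (\<forall>i. norm (C $ i)^2 = norm ((L ** C) $ i)^2 + norm (C $ i - (L ** C) $ i)^2)"
  using assms
proof (induction S rule: finite_induct)
  case empty
  have "mat 1 $ i = (axis i 1 :: real^'n)" for i
    by (simp add: mat_def axis_def vec_eq_iff)
  then show ?case
    by (intro exI[of _ "mat 1"]) simp
next
  case (insert k S)
  then obtain L :: "real^'n^'n" where "det L = 1"
    and orth: "\<forall>i\<in>S. \<forall>j\<in>S. i \<noteq> j \<longrightarrow> (L ** C) $ i \<bullet> (L ** C) $ j = 0"
    and unit: "\<forall>i. i \<notin> S \<longrightarrow> L $ i = axis i 1"
    and pyth: "\<forall>i. norm (C $ i)^2 = norm ((L ** C) $ i)^2 + norm (C $ i - (L ** C) $ i)^2"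
    by blast
  define B where "B = L ** C"
  define cf where "cf j = (C $ k \<bullet> B $ j) / (B $ j \<bullet> B $ j)" for j
  define p where "p = (\<Sum>j\<in>S. cf j *\<^sub>R B $ j)"
  define L' where "L' = (\<chi> i. if i = k then L $ k - (\<Sum>j\<in>S. cf j *\<^sub>R L $ j) else L $ i)"
  have "B $ k = C $ k"
    using unit insert.hyps by (simp add: B_def matrix_matrix_mult_nth_row axis_vector_matrix_mult)
  then have "det L' = 1" and new_rows: "(L' ** C) $ i = (if i = k then C $ k - p else B $ i)" for i
    using row_subtract_combination(1)[where k=k and S=S and L=L and c=cf]
      row_subtract_combination(2)[where k=k and S=S and L=L and c=cf and C=C]
      insert.hyps \<open>det L = 1\<close>
    by (simp_all add: L'_def B_def p_def)
  have residual: "(C $ k - p) \<bullet> B $ j = 0" if "j \<in> S" for j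
    using orthogonal_projection_residual(1)[where S=S and b="\<lambda>j. B $ j" and c="C $ k"]
      orth insert.hyps that
    by (simp add: p_def cf_def B_def)
  have "norm (C $ k)^2 = norm (C $ k - p)^2 + norm p^2"
    using orthogonal_projection_residual(2)[where S=S and b="\<lambda>j. B $ j" and c="C $ k"]
      orth insert.hyps
    by (simp add: p_def cf_def B_def)
  show ?case
  proof (intro exI[of _ L'] conjI ballI allI impI)
    fix i j
    assume "i \<in> insert k S" "j \<in> insert k S" "i \<noteq> j"
    then show "(L' ** C) $ i \<bullet> (L' ** C) $ j = 0"
      using orth residual insert.hyps by (auto simp: new_rows B_def inner_commute)
  next
    fix i
    assume "i \<notin> insert k S"
    then show "L' $ i = axis i 1"
      using unit by (simp add: L'_def)
  next
    fix i
    show "norm (C $ i)^2 = norm ((L' ** C) $ i)^2 + norm (C $ i - (L' ** C) $ i)^2"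
      using pyth \<open>norm (C $ k)^2 = norm (C $ k - p)^2 + norm p^2\<close> by (simp add: new_rows B_def)
  qed (rule \<open>det L' = 1\<close>)
qed

lemma orthogonalize_rows:
  fixes C :: "real^'m^'n"
  obtains L :: "real^'n^'n" where "det L = 1"
    and "\<And>i j. i \<noteq> j \<Longrightarrow> (L ** C) $ i \<bullet> (L ** C) $ j = 0"
    and "\<And>i. norm (C $ i)^2 = norm ((L ** C) $ i)^2 + norm (C $ i - (L ** C) $ i)^2"
  using orthogonalize_rows_on[of UNIV C] by auto

lemma det_gram_orthogonal_rows:
  fixes B :: "real^'m^'n"
  assumes "\<And>i j. i \<noteq> j \<Longrightarrow> B $ i \<bullet> B $ j = 0"
  shows "det (B ** transpose B) = (\<Prod>i\<in>UNIV. norm (B $ i)^2)"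
proof -
  have entries: "(B ** transpose B) $ i $ j = B $ i \<bullet> B $ j" for i j
    by (simp add: matrix_matrix_mult_def transpose_def inner_vec_def)
  then have "det (B ** transpose B) = (\<Prod>i\<in>UNIV. B $ i \<bullet> B $ i)"
    using assms by (subst det_diagonal) auto
  then show ?thesis
    by (simp add: power2_norm_eq_inner)
qed

lemma det_gram_orthogonalized:
  fixes C :: "real^'m^'n" and L :: "real^'n^'n"
  assumes "det L = 1" and "\<And>i j. i \<noteq> j \<Longrightarrow> (L ** C) $ i \<bullet> (L ** C) $ j = 0"
  shows "det (C ** transpose C) = (\<Prod>i\<in>UNIV. norm ((L ** C) $ i)^2)"
proof -
  have "(L ** C) ** transpose (L ** C) = L ** (C ** transpose C) ** transpose L"
    by (simp add: matrix_transpose_mul matrix_mul_assoc)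
  then have "det ((L ** C) ** transpose (L ** C)) = det (C ** transpose C)"
    using assms(1) by (simp add: det_mul det_transpose)
  with det_gram_orthogonal_rows[OF assms(2)] show ?thesis
    by simp
qed

lemma det_gram_nonneg: "0 \<le> det (C ** transpose (C :: real^'m^'n))"
proof -
  obtain L :: "real^'n^'n" where "det L = 1" "\<And>i j. i \<noteq> j \<Longrightarrow> (L ** C) $ i \<bullet> (L ** C) $ j = 0"
    using orthogonalize_rows by metis
  then show ?thesis
    by (simp add: det_gram_orthogonalized prod_nonneg)
qed

lemma det_square_orthogonalized:
  fixes C L :: "real^'n^'n"
  assumes "det L = 1" and "\<And>i j. i \<noteq> j \<Longrightarrow> (L ** C) $ i \<bullet> (L ** C) $ j = 0"
  shows "(det C)^2 = (\<Prod>i\<in>UNIV. norm ((L ** C) $ i)^2)"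
  using det_gram_orthogonalized[OF assms] by (simp add: det_mul det_transpose power2_eq_square)

lemma Hadamard_inequality: "\<bar>det C\<bar> \<le> (\<Prod>i\<in>UNIV. norm (C $ i :: real^'n))"
proof -
  obtain L :: "real^'n^'n" where L: "det L = 1" "\<And>i j. i \<noteq> j \<Longrightarrow> (L ** C) $ i \<bullet> (L ** C) $ j = 0"
    and pyth: "\<And>i. norm (C $ i)^2 = norm ((L ** C) $ i)^2 + norm (C $ i - (L ** C) $ i)^2"
    using orthogonalize_rows by metis
  have "\<bar>det C\<bar>^2 = (\<Prod>i\<in>UNIV. norm ((L ** C) $ i)^2)"
    using det_square_orthogonalized[OF L] by simp
  also have "\<dots> \<le> (\<Prod>i\<in>UNIV. norm (C $ i)^2)"
    by (intro prod_mono) (simp add: pyth)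
  also have "\<dots> = (\<Prod>i\<in>UNIV. norm (C $ i))^2"
    by (simp add: prod_power_distrib)
  finally show ?thesis
    by (rule power2_le_imp_le) (simp add: prod_nonneg)
qed

lemma Hadamard_equality_case:
  fixes C :: "real^'n^'n"
  assumes bound: "\<And>i. norm (C $ i) \<le> a" and "a ^ CARD('n) \<le> \<bar>det C\<bar>"
  shows "\<forall>i. norm (C $ i) = a" and "\<forall>i j. i \<noteq> j \<longrightarrow> C $ i \<bullet> C $ j = 0"
proof -
  obtain L :: "real^'n^'n" where L: "det L = 1" "\<And>i j. i \<noteq> j \<Longrightarrow> (L ** C) $ i \<bullet> (L ** C) $ j = 0"
    and pyth: "\<And>i. norm (C $ i)^2 = norm ((L ** C) $ i)^2 + norm (C $ i - (L ** C) $ i)^2"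
    using orthogonalize_rows by metis
  have "0 \<le> a"
    using bound norm_ge_zero order_trans by blast
  then have C_le: "norm (C $ i)^2 \<le> a^2" for i
    using bound by (simp add: power_mono)
  have B_le: "norm ((L ** C) $ i)^2 \<le> a^2" for i
    using C_le[of i] pyth[of i] zero_le_power2[of "norm (C $ i - (L ** C) $ i)"] by linarith
  have "norm ((L ** C) $ i)^2 = a^2" for i
  proof (rule ccontr)
    assume "norm ((L ** C) $ i)^2 \<noteq> a^2"
    with B_le[of i] have "norm ((L ** C) $ i)^2 < a^2"
      by simp
    moreover from this have "0 < a^2"
      using zero_le_power2 le_less_trans by blast
    ultimately have "(\<Prod>i\<in>UNIV. norm ((L ** C) $ i)^2) < (\<Prod>i\<in>(UNIV :: 'n set). a^2)"
      using B_le by (intro prod_mono_strict[of i]) auto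
    also have "\<dots> = (a ^ CARD('n))^2"
      by (simp add: power_mult[symmetric] mult.commute)
    also have "\<dots> \<le> (det C)^2"
      using assms(2) \<open>0 \<le> a\<close> by (metis abs_le_square_iff abs_of_nonneg zero_le_power)
    finally show False
      using det_square_orthogonalized[OF L] by simp
  qed
  then have "C $ i = (L ** C) $ i" and "norm (C $ i) = a" for i
    using pyth[of i] C_le[of i] \<open>0 \<le> a\<close> by (auto simp: power2_eq_iff_nonneg)
  then show "\<forall>i. norm (C $ i) = a" and "\<forall>i j. i \<noteq> j \<longrightarrow> C $ i \<bullet> C $ j = 0"
    using L(2) by metis+
qed

section \<open>The maximum volume ellipsoid inscribed in the unit box\<close>

lemma matrix_vector_mult_mat: "mat a *v x = a *\<^sub>R (x :: real^'n)"
  by (simp add: vec_eq_iff matrix_vector_mult_def mat_def if_distrib[of "\<lambda>c. c * _"] cong: if_cong)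

lemma measure_ellipsoid:
  fixes C :: "real^'n^'n"
  shows "measure lebesgue (ellipsoid C g) = \<bar>det C\<bar> * measure lebesgue (cball (0 :: real^'n) 1)"
proof -
  have "ellipsoid C g = (+) g ` (*v) C ` cball 0 1"
    unfolding ellipsoid_def by (auto simp: image_iff add.commute) (metis mem_cball_0)
  then have "measure lebesgue (ellipsoid C g) = measure lebesgue ((*v) C ` cball 0 1)"
    by (simp add: measure_translation)
  also have "\<dots> = \<bar>det C\<bar> * measure lebesgue (cball (0 :: real^'n) 1)"
    using measure_linear_image_cart[OF matrix_vector_mul_linear lmeasurable_cball, of C 0 1]
    by (simp only: matrix_of_matrix_vector_mul)
  finally show ?thesis .
qed

lemma ellipsoid_mat: "0 < r \<Longrightarrow> ellipsoid (mat r) c = cball (c :: real^'n) r"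
proof (intro set_eqI iffI)
  fix x
  assume "0 < r" and "x \<in> cball c r"
  then have "norm ((1 / r) *\<^sub>R (x - c)) \<le> 1"
    by (simp add: dist_norm norm_minus_commute)
  moreover have "x = mat r *v ((1 / r) *\<^sub>R (x - c)) + c"
    using \<open>0 < r\<close> by (simp add: matrix_vector_mult_mat)
  ultimately show "x \<in> ellipsoid (mat r) c"
    unfolding ellipsoid_def by blast
next
  fix x
  assume "0 < r" and "x \<in> ellipsoid (mat r) c"
  then obtain u where "norm u \<le> 1" and "x = r *\<^sub>R u + c"
    by (auto simp: ellipsoid_def matrix_vector_mult_mat)
  with \<open>0 < r\<close> show "x \<in> cball c r"
    by (simp add: dist_norm mult_left_le)
qed

lemma cball_half_subset_box_pos: "cball (vec (1/2)) (1/2) \<subseteq> (box_pos :: (real^'n) set)"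
proof
  fix x :: "real^'n"
  assume "x \<in> cball (vec (1/2)) (1/2)"
  then have half: "\<bar>x $ i - 1/2\<bar> \<le> 1/2" for i
    using component_le_norm_cart[of "x - vec (1/2)" i] by (simp add: dist_norm norm_minus_commute)
  have "0 \<le> x $ i \<and> x $ i \<le> 1" for i
    using abs_le_D1[OF half[of i]] abs_le_D2[OF half[of i]] by linarith
  then show "x \<in> box_pos"
    by (simp add: box_pos_def)
qed

lemma ellipsoid_subset_box_pos_rows:
  assumes "ellipsoid C g \<subseteq> box_pos"
  shows "norm (C $ i) \<le> g $ i" and "g $ i + norm (C $ i) \<le> 1"
proof -
  \<comment> \<open>\<open>u = 0\<close> if the row vanishes, since \<open>1 / 0 = 0\<close>\<close>
  define u where "u = (1 / norm (C $ i)) *\<^sub>R C $ i"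
  have "norm u \<le> 1" and "norm (- u) \<le> 1"
    by (simp_all add: u_def)
  then have "C *v u + g \<in> box_pos" and "C *v (- u) + g \<in> box_pos"
    using assms unfolding ellipsoid_def by blast+
  then have "C $ i \<bullet> u + g $ i \<le> 1" and "0 \<le> g $ i - C $ i \<bullet> u"
    by (simp_all add: box_pos_def matrix_vector_mul_component inner_minus_right)
  moreover have "C $ i \<bullet> u = norm (C $ i)"
    by (simp add: u_def power2_norm_eq_inner[symmetric] power2_eq_square)
  ultimately show "norm (C $ i) \<le> g $ i" and "g $ i + norm (C $ i) \<le> 1"
    by linarith+
qed

lemma psd_mat_mat: "0 \<le> a \<Longrightarrow> psd_mat (mat a :: real^'n^'n)"
  by (simp add: psd_mat_def matrix_vector_mult_mat)

lemma psd_mat_eq_mat_if_square: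
  fixes C :: "real^'n^'n"
  assumes "psd_mat C" and "C ** C = mat (a^2)" and "0 < a"
  shows "C = mat a"
proof -
  have "C *v x = a *\<^sub>R x" for x
  proof -
    define y where "y = C *v x - a *\<^sub>R x"
    have "C *v y = (C ** C) *v x - a *\<^sub>R (C *v x)"
      by (simp add: y_def matrix_vector_mult_diff_distrib matrix_vector_mult_scaleR matrix_vector_mul_assoc)
    also have "\<dots> = - a *\<^sub>R y"
      using assms(2) by (simp add: y_def matrix_vector_mult_mat algebra_simps power2_eq_square)
    finally have "0 \<le> - a * (y \<bullet> y)"
      using assms(1) unfolding psd_mat_def by (metis inner_scaleR_right)
    then have "y = 0"
      using \<open>0 < a\<close> by (simp add: mult_le_0_iff) (metis inner_gt_zero_iff not_less)
    then show ?thesis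
      by (simp add: y_def)
  qed
  then show ?thesis
    by (simp add: matrix_eq matrix_vector_mult_mat)
qed

lemma gram_orthogonal_rows_eq_mat:
  fixes C :: "real^'m^'n"
  assumes "\<forall>i. norm (C $ i) = a" and "\<forall>i j. i \<noteq> j \<longrightarrow> C $ i \<bullet> C $ j = 0"
  shows "C ** transpose C = mat (a^2)"
proof -
  have "(C ** transpose C) $ i $ j = C $ i \<bullet> C $ j" for i j
    by (simp add: matrix_matrix_mult_def transpose_def inner_vec_def)
  then show ?thesis
    using assms by (simp add: vec_eq_iff mat_def power2_norm_eq_inner[symmetric])
qed

lemma det_mat: "det (mat a :: real^'n^'n) = a ^ CARD('n)"
  by (subst det_diagonal) (auto simp: mat_def)

lemma measure_unit_ball_pos: "0 < measure lebesgue (cball (0 :: real^'n) 1)"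
  using content_cball_pos[of 1 "0 :: real^'n"] by simp

lemma is_MVIE_box_pos: "is_MVIE box_pos (mat (1/2) :: real^'n^'n) (vec (1/2))"
  unfolding is_MVIE_def
proof (intro conjI allI impI)
  show "ellipsoid (mat (1/2)) (vec (1/2)) \<subseteq> (box_pos :: (real^'n) set)"
    by (simp add: ellipsoid_mat cball_half_subset_box_pos)
  fix C :: "real^'n^'n" and g
  assume "psd_mat C \<and> ellipsoid C g \<subseteq> box_pos"
  then have "norm (C $ i) \<le> 1/2" for i
    using ellipsoid_subset_box_pos_rows[of C g i] by linarith
  then have "\<bar>det C\<bar> \<le> \<bar>det (mat (1/2) :: real^'n^'n)\<bar>"
    using Hadamard_inequality[of C] prod_mono[of UNIV "\<lambda>i. norm (C $ i)" "\<lambda>_. 1/2"]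
    by (simp add: det_mat)
  then show "measure lebesgue (ellipsoid C g)
      \<le> measure lebesgue (ellipsoid (mat (1/2)) (vec (1/2) :: real^'n))"
    unfolding measure_ellipsoid using measure_unit_ball_pos by (intro mult_right_mono) auto
qed (simp add: psd_mat_mat)

lemma is_MVIE_box_pos_unique:
  fixes C :: "real^'n^'n"
  assumes "is_MVIE box_pos C g"
  shows "C = mat (1/2)" and "g = vec (1/2)"
proof -
  have psd: "psd_mat C" and inside: "ellipsoid C g \<subseteq> box_pos"
    using assms by (auto simp: is_MVIE_def)
  have "measure lebesgue (ellipsoid (mat (1/2)) (vec (1/2) :: real^'n)) \<le> measure lebesgue (ellipsoid C g)"
    using assms is_MVIE_box_pos unfolding is_MVIE_def by (elim conjE allE impE) auto
  then have "\<bar>det (mat (1/2) :: real^'n^'n)\<bar> \<le> \<bar>det C\<bar>"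
    unfolding measure_ellipsoid using mult_le_cancel_right_pos[OF measure_unit_ball_pos] by blast
  then have "(1/2) ^ CARD('n) \<le> \<bar>det C\<bar>"
    by (simp add: det_mat)
  moreover have row_bound: "norm (C $ i) \<le> 1/2" for i
    using ellipsoid_subset_box_pos_rows[OF inside, of i] by linarith
  ultimately have rows: "\<forall>i. norm (C $ i) = 1/2" and "\<forall>i j. i \<noteq> j \<longrightarrow> C $ i \<bullet> C $ j = 0"
    using Hadamard_equality_case[OF row_bound] by blast+
  then have "C ** transpose C = mat ((1/2)^2)"
    by (rule gram_orthogonal_rows_eq_mat)
  moreover have "transpose C = C"
    using psd unfolding psd_mat_def by blast
  ultimately have "C ** C = mat ((1/2)^2)"
    by simp
  with psd show "C = mat (1/2)"
    by (rule psd_mat_eq_mat_if_square) simp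
  have "g $ i = 1/2" for i
    using ellipsoid_subset_box_pos_rows[OF inside, of i] rows by simp
  then show "g = vec (1/2)"
    by (simp add: vec_eq_iff)
qed

lemma MVIE_box_pos: "MVIE (box_pos :: (real^'n) set) = cball (vec (1/2)) (1/2)"
proof -
  have "MVIE (box_pos :: (real^'n) set) = ellipsoid (mat (1/2)) (vec (1/2))"
    unfolding MVIE_def using is_MVIE_box_pos is_MVIE_box_pos_unique by (intro the_equality) blast+
  then show ?thesis
    by (simp add: ellipsoid_mat)
qed

lemma MVIE_center_box_pos: "MVIE_center (box_pos :: (real^'n) set) = vec (1/2)"
  unfolding MVIE_center_def using is_MVIE_box_pos is_MVIE_box_pos_unique by (intro the_equality) blast+

section \<open>Polars and sufficiently scattered factors\<close>

lemma polar_wrt_cball: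
  fixes c :: "real^'n"
  assumes "0 < r"
  shows "polar_wrt (cball c r) c = cball 0 (1 / r)"
proof (intro set_eqI iffI)
  fix x :: "real^'n"
  assume polar: "x \<in> polar_wrt (cball c r) c"
  show "x \<in> cball 0 (1 / r)"
  proof (cases "x = 0")
    case False
    have "c + (r / norm x) *\<^sub>R x \<in> cball c r"
      using \<open>0 < r\<close> False by (simp add: dist_norm)
    then have "x \<bullet> ((c + (r / norm x) *\<^sub>R x) - c) \<le> 1"
      using polar unfolding polar_wrt_def by blast
    then have "x \<bullet> ((r / norm x) *\<^sub>R x) \<le> 1"
      by (simp only: add_diff_cancel_left')
    moreover have "x \<bullet> ((r / norm x) *\<^sub>R x) = norm x * r"
      using False by (simp add: power2_norm_eq_inner[symmetric] power2_eq_square)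
    ultimately show ?thesis
      using \<open>0 < r\<close> by (simp add: pos_le_divide_eq)
  qed (use \<open>0 < r\<close> in simp)
next
  fix x :: "real^'n"
  assume "x \<in> cball 0 (1 / r)"
  then have "norm x * norm (y - c) \<le> 1" if "y \<in> cball c r" for y
    using that \<open>0 < r\<close> mult_mono[of "norm x" "1 / r" "norm (y - c)" r]
    by (simp add: dist_norm norm_minus_commute)
  then show "x \<in> polar_wrt (cball c r) c"
    unfolding polar_wrt_def using norm_cauchy_schwarz order_trans by blast
qed

lemma polar_wrt_box_pos_l1_bound:
  assumes "x \<in> polar_wrt box_pos (vec (1/2) :: real^'n)"
  shows "(\<Sum>k\<in>UNIV. \<bar>x $ k\<bar>) \<le> 2"
proof -
  define y :: "real^'n" where "y = (\<chi> k. if 0 \<le> x $ k then 1 else 0)"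
  have "y \<in> box_pos"
    by (simp add: y_def box_pos_def)
  then have "x \<bullet> (y - vec (1/2)) \<le> 1"
    using assms by (auto simp: polar_wrt_def)
  moreover have "x \<bullet> (y - vec (1/2)) = (\<Sum>k\<in>UNIV. \<bar>x $ k\<bar>) / 2"
    unfolding inner_vec_def sum_divide_distrib by (intro sum.cong) (auto simp: y_def)
  ultimately show ?thesis
    by simp
qed

lemma unit_vector_in_l1_ball_coordinates:
  fixes a :: "real^'n"
  assumes "norm a = 1" and l1: "(\<Sum>k\<in>UNIV. \<bar>a $ k\<bar>) \<le> 1"
  shows "a $ k = 0 \<or> \<bar>a $ k\<bar> = 1"
proof -
  have "\<bar>a $ k\<bar> \<le> 1" for k
    using member_le_sum[of k UNIV "\<lambda>k. \<bar>a $ k\<bar>"] l1 by simp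
  then have square_le: "(a $ k)^2 \<le> \<bar>a $ k\<bar>" for k
    using mult_right_mono[of "\<bar>a $ k\<bar>" 1 "\<bar>a $ k\<bar>"] by (simp add: power2_eq_square)
  have "(\<Sum>k\<in>UNIV. (a $ k)^2) = 1"
    using assms(1) by (simp add: norm_vec_def L2_set_def)
  then have "(\<Sum>k\<in>UNIV. \<bar>a $ k\<bar> - (a $ k)^2) = 0"
    using l1 square_le sum_nonneg[of UNIV "\<lambda>k. \<bar>a $ k\<bar> - (a $ k)^2"]
    by (simp add: sum_subtractf)
  then have "\<bar>a $ k\<bar> = (a $ k)^2"
    using sum_nonneg_eq_0_iff[of UNIV "\<lambda>k. \<bar>a $ k\<bar> - (a $ k)^2"] square_le by simp
  moreover have "\<bar>a $ k\<bar> * (1 - \<bar>a $ k\<bar>) = \<bar>a $ k\<bar> - (a $ k)^2"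
    by (simp add: algebra_simps power2_eq_square)
  ultimately show ?thesis
    by simp
qed

lemma unit_vector_in_l1_ball_is_axis:
  fixes a :: "real^'n"
  assumes "norm a = 1" and l1: "(\<Sum>k\<in>UNIV. \<bar>a $ k\<bar>) \<le> 1" and "0 \<le> (\<Sum>k\<in>UNIV. a $ k)"
  shows "\<exists>k. a = axis k 1"
proof -
  have "a \<noteq> 0"
    using \<open>norm a = 1\<close> by auto
  then obtain k where "a $ k \<noteq> 0"
    by (auto simp: vec_eq_iff)
  then have "\<bar>a $ k\<bar> = 1"
    using unit_vector_in_l1_ball_coordinates[OF assms(1,2)] by blast
  have others: "a $ l = 0" if "l \<noteq> k" for l
  proof -
    have "\<bar>a $ k\<bar> + \<bar>a $ l\<bar> \<le> (\<Sum>k\<in>UNIV. \<bar>a $ k\<bar>)"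
      using that sum_mono2[of UNIV "{k, l}" "\<lambda>k. \<bar>a $ k\<bar>"] by simp
    then show ?thesis
      using l1 \<open>\<bar>a $ k\<bar> = 1\<close> by simp
  qed
  then have "(\<Sum>m\<in>UNIV. a $ m) = a $ k"
    by (subst sum.remove[of UNIV k]) (auto intro: sum.neutral)
  then have "a $ k = 1"
    using \<open>\<bar>a $ k\<bar> = 1\<close> assms(3) by linarith
  then show ?thesis
    using others by (auto simp: vec_eq_iff axis_def)
qed

lemma inner_bounds_on_cball:
  fixes a c :: "real^'n"
  assumes "\<forall>x\<in>cball c r. 0 \<le> a \<bullet> x \<and> a \<bullet> x \<le> 1" and "0 \<le> r"
  shows "r * norm a \<le> a \<bullet> c" and "a \<bullet> c + r * norm a \<le> 1"
proof -
  define u where "u = (r / norm a) *\<^sub>R a"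
  have "norm u \<le> r" and "a \<bullet> u = r * norm a"
    using \<open>0 \<le> r\<close> by (simp_all add: u_def power2_norm_eq_inner[symmetric] power2_eq_square)
  then have "0 \<le> a \<bullet> (c - u)" and "a \<bullet> (c + u) \<le> 1"
    using assms(1) by (simp_all add: dist_norm)
  with \<open>a \<bullet> u = r * norm a\<close> show "r * norm a \<le> a \<bullet> c" and "a \<bullet> c + r * norm a \<le> 1"
    by (simp_all add: inner_diff_right inner_add_right)
qed

lemma suff_scattered_box_pos:
  fixes S :: "real^'n^'r"
  assumes "suff_scattered S box_pos"
  shows "cball (vec (1/2)) (1/2) \<subseteq> convex hull (columns S)"
    and "polar_wrt (convex hull (columns S)) (vec (1/2)) \<inter> sphere 0 2
      \<subseteq> polar_wrt box_pos (vec (1/2))"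
proof -
  have "polar_wrt (MVIE box_pos) (MVIE_center box_pos) = cball (0 :: real^'r) 2"
    by (simp add: MVIE_box_pos MVIE_center_box_pos polar_wrt_cball)
  then have "polar_wrt (convex hull (columns S)) (vec (1/2)) \<inter> sphere 0 2
      = ext_pts (polar_wrt box_pos (vec (1/2)))"
    using assms by (simp add: suff_scattered_def Let_def MVIE_center_box_pos)
  then show "polar_wrt (convex hull (columns S)) (vec (1/2)) \<inter> sphere 0 2
      \<subseteq> polar_wrt box_pos (vec (1/2))"
    by (auto simp: ext_pts_def extreme_point_of_def)
  show "cball (vec (1/2)) (1/2) \<subseteq> convex hull (columns S)"
    using assms by (simp add: suff_scattered_def Let_def MVIE_box_pos)
qed

lemma scattered_unit_row_is_axis:
  fixes a :: "real^'n" and K :: "(real^'n) set"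
  assumes ball: "cball (vec (1/2)) (1/2) \<subseteq> K"
    and polar: "polar_wrt K (vec (1/2)) \<inter> sphere 0 2 \<subseteq> polar_wrt box_pos (vec (1/2))"
    and slab: "\<forall>x\<in>K. 0 \<le> a \<bullet> x \<and> a \<bullet> x \<le> 1"
    and "norm a = 1"
  shows "\<exists>k. a = axis k 1"
proof -
  let ?c = "vec (1/2) :: real^'n"
  have "\<forall>x\<in>cball ?c (1/2). 0 \<le> a \<bullet> x \<and> a \<bullet> x \<le> 1"
    using slab ball by blast
  then have "a \<bullet> ?c = 1/2"
    using inner_bounds_on_cball[of ?c "1/2" a] \<open>norm a = 1\<close> by simp
  then have "2 *\<^sub>R a \<in> polar_wrt K ?c"
    using slab by (auto simp: polar_wrt_def inner_diff_right)
  moreover have "2 *\<^sub>R a \<in> sphere 0 2"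
    using \<open>norm a = 1\<close> by simp
  ultimately have "(\<Sum>k\<in>UNIV. \<bar>(2 *\<^sub>R a) $ k\<bar>) \<le> 2"
    using polar polar_wrt_box_pos_l1_bound by blast
  then have "(\<Sum>k\<in>UNIV. \<bar>a $ k\<bar>) \<le> 1"
    by (simp add: abs_mult sum_distrib_left[symmetric])
  moreover have "(\<Sum>k\<in>UNIV. a $ k) = 1"
    using \<open>a \<bullet> ?c = 1/2\<close> by (simp add: inner_vec_def sum_divide_distrib[symmetric])
  ultimately show ?thesis
    using unit_vector_in_l1_ball_is_axis[OF \<open>norm a = 1\<close>] by simp
qed

lemma perm_mat_if_rows_axis:
  fixes A :: "real^'n^'n"
  assumes "\<And>i. A $ i = axis (p i) 1" and "det A \<noteq> 0"
  shows "perm_mat A"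
proof -
  have "inj p"
  proof (rule injI, rule ccontr)
    fix i j
    assume "p i = p j" and "i \<noteq> j"
    then have "row i A = row j A"
      using assms(1) by (simp add: row_def vec_nth_inverse)
    with \<open>i \<noteq> j\<close> \<open>det A \<noteq> 0\<close> show False
      using det_identical_rows by blast
  qed
  then have "p permutes UNIV"
    using finite_UNIV_inj_surj[of p] by (intro bij_imp_permutes) (auto simp: bij_betw_def)
  moreover have "A = (\<chi> i j. if p i = j then 1 else 0)"
    using assms(1) by (auto simp: vec_eq_iff axis_def)
  ultimately show ?thesis
    unfolding perm_mat_def by blast
qed

lemma perm_mat_orthogonal:
  assumes "perm_mat (Q :: real^'n^'n)"
  shows "Q ** transpose Q = mat 1"
proof -
  obtain p where "p permutes UNIV" and Q: "Q = (\<chi> i j. if p i = j then 1 else 0)"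
    using assms unfolding perm_mat_def by blast
  then have "inj p"
    by (simp add: permutes_inj)
  have rows: "Q $ i = axis (p i) 1" for i
    by (auto simp: Q axis_def vec_eq_iff)
  have "(Q ** transpose Q) $ i $ j = Q $ i \<bullet> Q $ j" for i j
    by (simp add: matrix_matrix_mult_def transpose_def inner_vec_def)
  also have "\<dots> i j = (if p i = p j then 1 else 0)" for i j
    by (simp add: rows inner_axis_axis)
  also have "\<dots> i j = mat 1 $ i $ j" for i j
    using \<open>inj p\<close> by (auto simp: mat_def inj_eq)
  finally show ?thesis
    by (simp add: vec_eq_iff)
qed

lemma perm_mat_if_maps_into_box_pos:
  fixes A :: "real^'n^'n" and K :: "(real^'n) set"
  assumes ball: "cball (vec (1/2)) (1/2) \<subseteq> K"
    and polar: "polar_wrt K (vec (1/2)) \<inter> sphere 0 2 \<subseteq> polar_wrt box_pos (vec (1/2))"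
    and maps: "(*v) A ` K \<subseteq> box_pos" and "1 \<le> \<bar>det A\<bar>"
  shows "perm_mat A"
proof -
  have slab: "\<forall>x\<in>K. 0 \<le> A $ i \<bullet> x \<and> A $ i \<bullet> x \<le> 1" for i
    using maps unfolding image_subset_iff by (simp add: box_pos_def matrix_vector_mul_component)
  then have "\<forall>x\<in>cball (vec (1/2)) (1/2). 0 \<le> A $ i \<bullet> x \<and> A $ i \<bullet> x \<le> 1" for i
    using ball by blast
  then have "norm (A $ i) \<le> 1" for i
    using inner_bounds_on_cball[of "vec (1/2)" "1/2" "A $ i"] by simp
  then have "\<forall>i. norm (A $ i) = 1"
    using Hadamard_equality_case[of A 1] \<open>1 \<le> \<bar>det A\<bar>\<close> by simp
  then have "\<forall>i. \<exists>k. A $ i = axis k 1"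
    using scattered_unit_row_is_axis[OF ball polar] slab by blast
  then obtain p where "\<And>i. A $ i = axis (p i) 1"
    by metis
  then show ?thesis
    using \<open>1 \<le> \<bar>det A\<bar>\<close> by (intro perm_mat_if_rows_axis) auto
qed

section \<open>Optimal factorisations\<close>

lemma box_pos_eq_cbox: "box_pos = cbox (0 :: real^'n) 1"
  by (auto simp: box_pos_def mem_box_cart)

lemma det_gram_nonzero_if_hull_contains_ball:
  fixes S :: "real^'n^'r" and c :: "real^'r"
  assumes "0 < r" and ball: "cball c r \<subseteq> convex hull (columns S)"
  shows "det (S ** transpose S) \<noteq> 0"
proof
  assume "det (S ** transpose S) = 0"
  then obtain v where "v \<noteq> 0" and "(S ** transpose S) *v v = 0"
    using det_eq_0_rank matrix_nonfull_linear_equations_eq by (metis less_irrefl)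
  then have "(transpose S *v v) \<bullet> (transpose S *v v) = 0"
    by (metis dot_lmul_matrix inner_zero_right matrix_vector_mul_assoc transpose_matrix_vector)
  then have "v \<bullet> column j S = 0" for j
    by (simp add: vec_eq_iff matrix_vector_mul_component transpose_def column_def inner_commute)
  then have "columns S \<subseteq> {x. v \<bullet> x = 0}"
    by (auto simp: columns_def)
  then have "convex hull (columns S) \<subseteq> {x. v \<bullet> x = 0}"
    by (intro hull_minimal convex_hyperplane)
  with ball have hyperplane: "cball c r \<subseteq> {x. v \<bullet> x = 0}"
    by blast
  have "c \<in> cball c r" and "c + (r / norm v) *\<^sub>R v \<in> cball c r"
    using \<open>0 < r\<close> \<open>v \<noteq> 0\<close> by (simp_all add: dist_norm)
  then have "v \<bullet> c = 0" and "v \<bullet> (c + (r / norm v) *\<^sub>R v) = 0"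
    using hyperplane by blast+
  then have "r * norm v = 0"
    using \<open>v \<noteq> 0\<close> by (simp add: inner_add_right power2_norm_eq_inner[symmetric] power2_eq_square)
  then show False
    using \<open>0 < r\<close> \<open>v \<noteq> 0\<close> by simp
qed

lemma column_matrix_matrix_mult: "column j (A ** B) = A *v column j (B :: real^'n^'m)"
  by (simp add: column_def matrix_matrix_mult_def matrix_vector_mult_def vec_eq_iff)

lemma matrix_vector_mult_convex_hull_columns:
  fixes A :: "real^'m^'n" and S :: "real^'k^'m"
  assumes "convex P" and "\<And>j. column j (A ** S) \<in> P"
  shows "(*v) A ` (convex hull (columns S)) \<subseteq> P"
proof -
  have "columns S \<subseteq> (*v) A -` P"
    using assms(2) by (auto simp: columns_def column_matrix_matrix_mult)
  then have "convex hull (columns S) \<subseteq> (*v) A -` P"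
    by (intro hull_minimal convex_linear_vimage matrix_vector_mul_linear assms(1))
  then show ?thesis
    by blast
qed

lemma matrix_mult_right_cancel:
  fixes S :: "real^'n^'r" and X Y :: "real^'r^'m"
  assumes "det (S ** transpose S) \<noteq> 0" and "X ** S = Y ** S"
  shows "X = Y"
proof -
  obtain G where "(S ** transpose S) ** G = mat 1"
    using assms(1) invertible_det_nz invertible_right_inverse by blast
  then have "S ** (transpose S ** G) = mat 1"
    by (simp add: matrix_mul_assoc)
  then show ?thesis
    using assms(2) by (metis matrix_mul_assoc matrix_mul_rid)
qed

lemma detmax_optimal_factor:
  fixes Hg H :: "real^'r^'m" and Sg S :: "real^'n^'r"
  assumes opt: "detmax_optimal (Hg ** Sg) P H S" and "\<forall>j. column j Sg \<in> P"
    and "rank Hg = CARD('r)" and "det (Sg ** transpose Sg) \<noteq> 0"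
  obtains A where "S = A ** Sg" and "Hg = H ** A" and "1 \<le> \<bar>det A\<bar>"
proof -
  have Y: "Hg ** Sg = H ** S"
    using opt by (simp add: detmax_optimal_def detmax_feasible_def)
  have le: "det (Sg ** transpose Sg) \<le> det (S ** transpose S)"
    using opt assms(2) unfolding detmax_optimal_def detmax_feasible_def by blast
  obtain L where "L ** Hg = mat 1"
    using assms(3) full_rank_injective matrix_left_invertible_injective by blast
  define W where "W = L ** H"
  have "Sg = W ** S"
    by (metis W_def Y \<open>L ** Hg = mat 1\<close> matrix_mul_assoc matrix_mul_lid)
  then have "Sg ** transpose Sg = W ** (S ** transpose S) ** transpose W"
    by (simp add: matrix_transpose_mul matrix_mul_assoc)
  then have "det (Sg ** transpose Sg) = (det W)^2 * det (S ** transpose S)"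
    by (simp add: det_mul det_transpose power2_eq_square)
  moreover have "0 < det (Sg ** transpose Sg)"
    using assms(4) det_gram_nonneg[of Sg] by linarith
  ultimately have "det W \<noteq> 0" and "(det W)^2 \<le> 1"
    using le by (auto simp: mult_le_cancel_right2 zero_less_mult_iff)
  then obtain A where "A ** W = mat 1"
    using invertible_det_nz invertible_left_inverse by blast
  have "S = A ** Sg"
    by (simp add: \<open>Sg = W ** S\<close> matrix_mul_assoc \<open>A ** W = mat 1\<close>)
  moreover have "Hg = H ** A"
    using assms(4) by (rule matrix_mult_right_cancel) (simp add: Y \<open>S = A ** Sg\<close> matrix_mul_assoc)
  moreover have "1 \<le> \<bar>det A\<bar>"
  proof -
    have "\<bar>det A\<bar> * \<bar>det W\<bar> = 1"
      by (metis \<open>A ** W = mat 1\<close> abs_mult abs_one det_I det_mul)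
    moreover have "\<bar>det W\<bar> \<le> 1"
      using \<open>(det W)^2 \<le> 1\<close> by (simp add: abs_square_le_1)
    ultimately show ?thesis
      using mult_left_le[of "\<bar>det W\<bar>" "\<bar>det A\<bar>"] by simp
  qed
  ultimately show ?thesis
    using that by blast
qed

theorem theorem4:
  fixes Hg :: "real^'r^'m" and Sg :: "real^'n^'r"
    and H :: "real^'r^'m" and S :: "real^'n^'r"
  assumes "CARD('r) \<le> CARD('m)" and "CARD('r) \<le> CARD('n)"
    and "rank Hg = CARD('r)"
    and "\<forall>j. column j Sg \<in> box_pos"
    and "suff_scattered Sg box_pos"
    and "detmax_optimal (Hg ** Sg) box_pos H S"
  shows "\<exists>Q. perm_mat Q \<and> H = Hg ** transpose Q \<and> S = Q ** Sg"
proof -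
  let ?K = "convex hull (columns Sg)"
  have ball: "cball (vec (1/2)) (1/2) \<subseteq> ?K"
    and polar: "polar_wrt ?K (vec (1/2)) \<inter> sphere 0 2 \<subseteq> polar_wrt box_pos (vec (1/2))"
    using suff_scattered_box_pos[OF assms(5)] by blast+
  then have "det (Sg ** transpose Sg) \<noteq> 0"
    by (intro det_gram_nonzero_if_hull_contains_ball[of "1/2"]) auto
  then obtain A where "S = A ** Sg" and "Hg = H ** A" and "1 \<le> \<bar>det A\<bar>"
    using detmax_optimal_factor[OF assms(6) assms(4) assms(3)] by blast
  moreover have "(*v) A ` ?K \<subseteq> box_pos"
    using assms(6) \<open>S = A ** Sg\<close> unfolding detmax_optimal_def detmax_feasible_def box_pos_eq_cbox
    by (intro matrix_vector_mult_convex_hull_columns convex_box) auto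
  ultimately have "perm_mat A"
    using perm_mat_if_maps_into_box_pos[OF ball polar] by blast
  moreover have "H = Hg ** transpose A"
    using perm_mat_orthogonal[OF \<open>perm_mat A\<close>]
    by (simp add: \<open>Hg = H ** A\<close> matrix_mul_assoc[symmetric])
  ultimately show ?thesis
    using \<open>S = A ** Sg\<close> by blast
qed

end
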